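(* Let $d_n=2^n\Delta_n+\tfrac12$. Then as $n\to\infty$, $$2^{-n}d_n=\frac{1}{2\sqrt\pi}\,\frac{\Gamma(n+1/2)}{\Gamma(n+1)}+O(n^{-3/2}),\qquad\text{and}\qquad \Delta_n=\frac{1}{2\sqrt{\pi n}}+O(n^{-3/2}).$$
   Context: A fair coin is flipped $n$ times, producing a sequence $x_1,\dots,x_n\in\{H,T\}$ of independent uniformly random outcomes. Alice's score is the number of indices $i\in\{1,\dots,n-1\}$ with $(x_i,x_{i+1})=(H,H)$; Bob's score is the number of indices $i\in\{1,\dots,n-1\}$ with $(x_i,x_{i+1})=(H,T)$. $\Delta_n$ is the probability that Bob's score strictly exceeds Alice's minus the probability that Alice's score strictly exceeds Bob's. *)

theory Defs
  imports "HOL-Analysis.Analysis" "HOL-Library.Landau_Symbols"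
begin

text \<open>Coin sequences of length n are lists of booleans; True = H, False = T.
  Each of the 2^n sequences has probability 2^(-n).\<close>

definition coin_seqs :: "nat \<Rightarrow> bool list set" where
  "coin_seqs n = {xs. length xs = n}"

definition alice_score :: "bool list \<Rightarrow> nat" where
  "alice_score xs = card {i. i + 1 < length xs \<and> xs ! i \<and> xs ! (i + 1)}"

definition bob_score :: "bool list \<Rightarrow> nat" where
  "bob_score xs = card {i. i + 1 < length xs \<and> xs ! i \<and> \<not> xs ! (i + 1)}"

definition Delta :: "nat \<Rightarrow> real" where
  "Delta n = (real (card {xs \<in> coin_seqs n. bob_score xs > alice_score xs})
              - real (card {xs \<in> coin_seqs n. alice_score xs > bob_score xs})) / 2 ^ n"

definition dseq :: "nat \<Rightarrow> real" where
  "dseq n = 2 ^ n * Delta n + 1 / 2"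

end

theory Submission
  imports Defs "HOL-Computational_Algebra.Formal_Power_Series" "HOL-Real_Asymp.Real_Asymp"
begin

text \<open>Classifying sequences by their last coin and both scores gives recurrences (a score can
  only change right after a head) that are solved by products of binomial coefficients. Summing
  them shows d_n = c_n / 2 with c_n = sum_k C(2k,k) C(n-2k,k), whose generating function is
  ((1-x)(1-x-4x^3))^(-1/2). Since (1-x)(1-x-4x^3) = (1-2x)(1+x^2(1-2x)), this is (1-2x)^(-1/2)
  times (1+x^2(1-2x))^(-1/2). The first factor alone has coefficients
  2^n C(2n,n)/4^n = 2^n Gamma(n+1/2) / (sqrt pi Gamma(n+1)); expanding the second one in powers
  of x^2(1-2x) leaves a remainder O(2^n n^(-3/2)), because the coefficients of (1-2x)^(1/2) are
  O(2^k k^(-3/2)). Finally, Wallis' product squeezes C(2n,n)/4^n to within O(n^(-3/2)) of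
  1/sqrt(pi n).\<close>

section \<open>Counting coin sequences by their scores\<close>

definition adjacent_count :: "('a \<Rightarrow> 'a \<Rightarrow> bool) \<Rightarrow> 'a list \<Rightarrow> nat" where
  "adjacent_count P xs = card {i. i + 1 < length xs \<and> P (xs ! i) (xs ! (i + 1))}"

lemma adjacent_count_snoc:
  "adjacent_count P (xs @ [x]) =
     adjacent_count P xs + (if xs \<noteq> [] \<and> P (last xs) x then 1 else 0)"
proof -
  let ?S = "{i. i + 1 < length xs \<and> P (xs ! i) (xs ! (i + 1))}"
  let ?T = "if xs \<noteq> [] \<and> P (last xs) x then {length xs - 1} else {}"
  have split: "{i. i + 1 < length (xs @ [x]) \<and> P ((xs @ [x]) ! i) ((xs @ [x]) ! (i + 1))} = ?S \<union> ?T"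
  proof (intro set_eqI iffI)
    fix i assume "i \<in> {i. i + 1 < length (xs @ [x]) \<and> P ((xs @ [x]) ! i) ((xs @ [x]) ! (i + 1))}"
    then have "i + 1 < length xs \<or> i + 1 = length xs" and "P ((xs @ [x]) ! i) ((xs @ [x]) ! (i + 1))"
      by auto
    then show "i \<in> ?S \<union> ?T"
    proof (elim disjE)
      assume "i + 1 = length xs"
      then have "xs \<noteq> []" "i = length xs - 1"
        by auto
      then have "last xs = xs ! i"
        by (simp add: last_conv_nth)
      with \<open>P _ _\<close> \<open>i + 1 = length xs\<close> show ?thesis
        by (auto simp: nth_append)
    qed (auto simp: nth_append)
  qed (auto simp: nth_append last_conv_nth split: if_splits)
  have "finite ?S"
    by (rule finite_subset[of _ "{..<length xs}"]) auto
  then show ?thesis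
    unfolding adjacent_count_def split by (subst card_Un_disjoint) auto
qed

lemma adjacent_count_le_length: "adjacent_count P xs \<le> length xs"
proof -
  have "adjacent_count P xs \<le> card {..<length xs}"
    unfolding adjacent_count_def by (rule card_mono) auto
  then show ?thesis by simp
qed

lemma alice_score_eq_adjacent_count: "alice_score = adjacent_count (\<lambda>a b. a \<and> b)"
  by (simp add: fun_eq_iff alice_score_def adjacent_count_def)

lemma bob_score_eq_adjacent_count: "bob_score = adjacent_count (\<lambda>a b. a \<and> \<not> b)"
  by (simp add: fun_eq_iff bob_score_def adjacent_count_def)

definition ends_with_head :: "bool list \<Rightarrow> bool" where
  "ends_with_head xs \<longleftrightarrow> xs \<noteq> [] \<and> last xs"

lemma ends_with_head_snoc [simp]: "ends_with_head (xs @ [x]) = x"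
  by (simp add: ends_with_head_def)

lemma alice_score_snoc [simp]:
  "alice_score (xs @ [x]) = alice_score xs + (if ends_with_head xs \<and> x then 1 else 0)"
  by (simp add: alice_score_eq_adjacent_count adjacent_count_snoc ends_with_head_def)

lemma bob_score_snoc [simp]:
  "bob_score (xs @ [x]) = bob_score xs + (if ends_with_head xs \<and> \<not> x then 1 else 0)"
  by (simp add: bob_score_eq_adjacent_count adjacent_count_snoc ends_with_head_def)

lemma finite_coin_seqs: "finite (coin_seqs n)"
  using finite_lists_length_eq[of "UNIV :: bool set" n] by (simp add: coin_seqs_def)

lemma coin_seqs_0: "coin_seqs 0 = {[]}"
  by (auto simp: coin_seqs_def)

lemma coin_seqs_Suc: "coin_seqs (Suc n) = (\<lambda>(ys, x). ys @ [x]) ` (coin_seqs n \<times> UNIV)"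
proof (intro set_eqI iffI)
  fix xs assume "xs \<in> coin_seqs (Suc n)"
  then have "length xs = Suc n"
    by (simp add: coin_seqs_def)
  then have "xs = butlast xs @ [last xs]" "butlast xs \<in> coin_seqs n"
    by (simp_all add: coin_seqs_def flip: length_greater_0_conv)
  then show "xs \<in> (\<lambda>(ys, x). ys @ [x]) ` (coin_seqs n \<times> UNIV)"
    by (intro rev_image_eqI[of "(butlast xs, last xs)"]) auto
qed (auto simp: coin_seqs_def)

lemma sum_coin_seqs_Suc:
  "(\<Sum>xs\<in>coin_seqs (Suc n). f xs) = (\<Sum>ys\<in>coin_seqs n. f (ys @ [True]) + f (ys @ [False]))"
proof -
  have "inj_on (\<lambda>(ys, x). ys @ [x]) (coin_seqs n \<times> (UNIV :: bool set))"
    by (auto simp: inj_on_def)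
  then have "(\<Sum>xs\<in>coin_seqs (Suc n). f xs) = (\<Sum>(ys, x)\<in>coin_seqs n \<times> UNIV. f (ys @ [x]))"
    unfolding coin_seqs_Suc by (subst sum.reindex) (auto simp: case_prod_unfold)
  also have "\<dots> = (\<Sum>ys\<in>coin_seqs n. f (ys @ [True]) + f (ys @ [False]))"
    by (simp add: sum.cartesian_product[symmetric] UNIV_bool add.commute)
  finally show ?thesis .
qed

lemma card_filter_coin_seqs:
  "of_nat (card {xs \<in> coin_seqs n. P xs}) = (\<Sum>xs\<in>coin_seqs n. if P xs then 1 else 0 :: 'a :: semiring_1)"
  by (simp add: sum.inter_filter[OF finite_coin_seqs, symmetric])

definition score_count :: "bool \<Rightarrow> nat \<Rightarrow> nat \<Rightarrow> nat \<Rightarrow> nat" where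
  "score_count h n a b =
     card {xs \<in> coin_seqs n. ends_with_head xs = h \<and> alice_score xs = a \<and> bob_score xs = b}"

lemma score_count_eq_sum:
  "score_count h n a b = (\<Sum>xs\<in>coin_seqs n.
     if ends_with_head xs = h \<and> alice_score xs = a \<and> bob_score xs = b then 1 else 0)"
  using card_filter_coin_seqs[where 'a = nat] by (simp add: score_count_def)

lemma score_count_0:
  "score_count h 0 a b = (if \<not> h \<and> a = 0 \<and> b = 0 then 1 else 0)"
  by (simp add: score_count_eq_sum coin_seqs_0 ends_with_head_def alice_score_def bob_score_def)

lemma score_count_head_Suc:
  "score_count True (Suc n) a b =
     (if a = 0 then 0 else score_count True n (a - 1) b) + score_count False n a b"
  unfolding score_count_eq_sum sum_coin_seqs_Suc
  by (cases a) (auto simp: sum.distrib[symmetric] intro!: sum.cong)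

lemma score_count_tail_Suc:
  "score_count False (Suc n) a b =
     (if b = 0 then 0 else score_count True n a (b - 1)) + score_count False n a b"
  unfolding score_count_eq_sum sum_coin_seqs_Suc
  by (cases b) (auto simp: sum.distrib[symmetric] intro!: sum.cong)

definition head_count_formula :: "nat \<Rightarrow> nat \<Rightarrow> nat \<Rightarrow> nat" where
  "head_count_formula n a b =
     (if a + b + 1 \<le> n then ((a + b) choose b) * ((n - 1 - a - b) choose b) else 0)"

definition tail_count_formula :: "nat \<Rightarrow> nat \<Rightarrow> nat \<Rightarrow> nat" where
  "tail_count_formula n a b =
     (if b = 0 then (if a = 0 then 1 else 0)
      else if a + b \<le> n then ((a + b - 1) choose (b - 1)) * ((n - a - b) choose b) else 0)"

lemma head_count_formula_Suc:
  "head_count_formula (Suc n) a b =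
     (if a = 0 then 0 else head_count_formula n (a - 1) b) + tail_count_formula n a b"
proof (cases a)
  case (Suc a')
  show ?thesis
  proof (cases "b = 0 \<or> \<not> a' + b + 1 \<le> n")
    case False
    then obtain b' where "b = Suc b'" "a' + b + 1 \<le> n"
      by (cases b) auto
    moreover have "(Suc a' + b choose b) = (a' + b choose b') + (a' + b choose b)"
      using \<open>b = Suc b'\<close> by simp
    ultimately show ?thesis
      using Suc by (simp add: head_count_formula_def tail_count_formula_def algebra_simps)
  qed (use Suc in \<open>auto simp: head_count_formula_def tail_count_formula_def\<close>)
qed (simp add: head_count_formula_def tail_count_formula_def)

lemma tail_count_formula_Suc:
  "tail_count_formula (Suc n) a b =
     (if b = 0 then 0 else head_count_formula n a (b - 1)) + tail_count_formula n a b"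
proof (cases b)
  case (Suc b')
  show ?thesis
  proof (cases "a + b \<le> n")
    case True
    have "(Suc (n - a - b) choose b) = (n - a - b choose b') + (n - a - b choose b)"
      using Suc by simp
    moreover have "Suc n - a - b = Suc (n - a - b)" "n - 1 - a - b' = n - a - b"
      using True Suc by auto
    ultimately show ?thesis
      using True Suc by (simp add: head_count_formula_def tail_count_formula_def algebra_simps)
  qed (use Suc in \<open>cases "a + b = Suc n"; auto simp: head_count_formula_def tail_count_formula_def\<close>)
qed (simp add: tail_count_formula_def)

lemma score_count_eq_formula:
  "score_count True n a b = head_count_formula n a b \<and>
   score_count False n a b = tail_count_formula n a b"
proof (induction n arbitrary: a b)
  case 0
  show ?case
    by (simp add: score_count_0 head_count_formula_def tail_count_formula_def)
next
  case (Suc n)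
  then show ?case
    by (simp add: score_count_head_Suc score_count_tail_Suc head_count_formula_Suc tail_count_formula_Suc)
qed

section \<open>The central binomial convolution\<close>

definition score_balance :: "nat \<Rightarrow> int" where
  "score_balance n = (\<Sum>xs\<in>coin_seqs n. sgn (int (bob_score xs) - int (alice_score xs)))"

lemma Delta_eq_score_balance: "Delta n = score_balance n / 2 ^ n"
proof -
  have "real (card {xs \<in> coin_seqs n. bob_score xs > alice_score xs})
      - real (card {xs \<in> coin_seqs n. alice_score xs > bob_score xs})
      = (\<Sum>xs\<in>coin_seqs n. (if bob_score xs > alice_score xs then 1 else 0)
                                - (if alice_score xs > bob_score xs then 1 else 0))"
    by (simp add: card_filter_coin_seqs sum_subtractf)
  also have "\<dots> = score_balance n"
    unfolding score_balance_def of_int_sum by (intro sum.cong) (auto simp: sgn_if)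
  finally show ?thesis unfolding Delta_def by simp
qed

lemma score_balance_Suc:
  "score_balance (Suc n) = 2 * score_balance n
     + int (card {xs \<in> coin_seqs n. ends_with_head xs \<and> alice_score xs = Suc (bob_score xs)})
     - int (card {xs \<in> coin_seqs n. ends_with_head xs \<and> bob_score xs = Suc (alice_score xs)})"
proof -
  have step: "sgn (int (bob_score (ys @ [True])) - int (alice_score (ys @ [True])))
      + sgn (int (bob_score (ys @ [False])) - int (alice_score (ys @ [False])))
      = 2 * sgn (int (bob_score ys) - int (alice_score ys))
        + (if ends_with_head ys \<and> alice_score ys = Suc (bob_score ys) then 1 else 0)
        - (if ends_with_head ys \<and> bob_score ys = Suc (alice_score ys) then 1 else 0)" for ys
    by (cases "ends_with_head ys") (auto simp: sgn_if)
  show ?thesis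
    unfolding score_balance_def sum_coin_seqs_Suc step
    by (simp add: card_filter_coin_seqs sum.distrib sum_subtractf sum_distrib_left)
qed

lemma card_eq_sum_card_fibres:
  assumes "finite S" "finite T" "g ` S \<subseteq> T"
  shows "card S = (\<Sum>y\<in>T. card {x \<in> S. g x = y})"
  by (simp only: card_eq_sum sum.group[OF assms])

lemma card_head_alice_ahead:
  "card {xs \<in> coin_seqs n. ends_with_head xs \<and> alice_score xs = Suc (bob_score xs)}
     = (\<Sum>b\<le>n. score_count True n (Suc b) b)" (is "card ?D = _")
proof -
  have "bob_score ` ?D \<subseteq> {..n}"
    using adjacent_count_le_length by (auto simp: coin_seqs_def bob_score_eq_adjacent_count)
  then have "card ?D = (\<Sum>b\<le>n. card {xs \<in> ?D. bob_score xs = b})"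
    by (intro card_eq_sum_card_fibres) (simp_all add: finite_coin_seqs)
  also have "\<dots> = (\<Sum>b\<le>n. score_count True n (Suc b) b)"
    unfolding score_count_def by (intro sum.cong refl arg_cong[where f = card]) auto
  finally show ?thesis .
qed

lemma card_head_bob_ahead:
  "card {xs \<in> coin_seqs n. ends_with_head xs \<and> bob_score xs = Suc (alice_score xs)}
     = (\<Sum>a\<le>n. score_count True n a (Suc a))" (is "card ?D = _")
proof -
  have "alice_score ` ?D \<subseteq> {..n}"
    using adjacent_count_le_length by (auto simp: coin_seqs_def alice_score_eq_adjacent_count)
  then have "card ?D = (\<Sum>a\<le>n. card {xs \<in> ?D. alice_score xs = a})"
    by (intro card_eq_sum_card_fibres) (simp_all add: finite_coin_seqs)
  also have "\<dots> = (\<Sum>a\<le>n. score_count True n a (Suc a))"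
    unfolding score_count_def by (intro sum.cong refl arg_cong[where f = card]) auto
  finally show ?thesis .
qed

definition cseq_term :: "nat \<Rightarrow> nat \<Rightarrow> nat" where
  "cseq_term n k = ((2 * k) choose k) * ((n - 2 * k) choose k)"

definition cseq :: "nat \<Rightarrow> nat" where
  "cseq n = (\<Sum>k\<le>n. cseq_term n k)"

lemma cseq_term_0 [simp]: "cseq_term n 0 = 1"
  by (simp add: cseq_term_def)

text \<open>The recurrence of score_balance, with the diagonal counts replaced by their closed form.\<close>

lemma cseq_term_Suc_Suc:
  "cseq_term (Suc n) (Suc b) + 2 * head_count_formula n b (Suc b)
     = 2 * cseq_term n (Suc b) + 2 * head_count_formula n (Suc b) b"
proof (cases "2 * b + 2 \<le> n")
  case True
  define m where "m = n - 2 * b - 2"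
  define c where "c = (2 * b + 1) choose b"
  have sym: "(2 * b + 1) choose (Suc b) = c"
    using binomial_symmetric[of "Suc b" "2 * b + 1"] by (simp add: c_def)
  have central: "(2 * Suc b) choose (Suc b) = 2 * c"
    using sym by (simp add: c_def)
  have "Suc n - 2 * Suc b = Suc m" "n - 2 * Suc b = m" "n - 1 - b - Suc b = m" "n - 1 - Suc b - b = m"
    "b + Suc b + 1 \<le> n" "Suc b + b + 1 \<le> n"
    using True by (auto simp: m_def)
  moreover have "b + Suc b = 2 * b + 1" "Suc b + b = 2 * b + 1"
    by simp_all
  ultimately have "cseq_term (Suc n) (Suc b) = 2 * c * ((m choose b) + (m choose Suc b))"
    and "cseq_term n (Suc b) = 2 * c * (m choose Suc b)"
    and "head_count_formula n b (Suc b) = c * (m choose Suc b)"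
    and "head_count_formula n (Suc b) b = c * (m choose b)"
    unfolding cseq_term_def head_count_formula_def by (simp_all only: central sym c_def if_True) simp_all
  then show ?thesis by (simp add: algebra_simps)
next
  case False
  then show ?thesis by (simp add: cseq_term_def head_count_formula_def)
qed

lemma cseq_eq_score_balance: "int (cseq n) = 2 * score_balance n + 1"
proof (induction n)
  case 0
  show ?case
    by (simp add: score_balance_def coin_seqs_0 cseq_def alice_score_def bob_score_def)
next
  case (Suc n)
  have cseq_Suc: "cseq (Suc n) = 1 + (\<Sum>b\<le>n. cseq_term (Suc n) (Suc b))"
    unfolding cseq_def sum.atMost_Suc_shift by simp
  have "cseq n = (\<Sum>k\<le>Suc n. cseq_term n k)"
    by (simp add: cseq_def cseq_term_def)
  then have cseq_n: "cseq n = 1 + (\<Sum>b\<le>n. cseq_term n (Suc b))"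
    by (simp only: sum.atMost_Suc_shift cseq_term_0)
  have "(\<Sum>b\<le>n. cseq_term (Suc n) (Suc b) + 2 * head_count_formula n b (Suc b))
      = (\<Sum>b\<le>n. 2 * cseq_term n (Suc b) + 2 * head_count_formula n (Suc b) b)"
    using cseq_term_Suc_Suc by simp
  then have "cseq (Suc n) + 1 + 2 * (\<Sum>a\<le>n. head_count_formula n a (Suc a))
      = 2 * cseq n + 2 * (\<Sum>b\<le>n. head_count_formula n (Suc b) b)"
    unfolding cseq_Suc cseq_n by (simp add: sum.distrib sum_distrib_left)
  then have "int (cseq (Suc n)) + 1 + 2 * int (\<Sum>a\<le>n. head_count_formula n a (Suc a))
      = 2 * int (cseq n) + 2 * int (\<Sum>b\<le>n. head_count_formula n (Suc b) b)"
    by (metis (mono_tags) of_nat_add of_nat_mult of_nat_numeral of_nat_1)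
  then show ?case
    using Suc.IH score_balance_Suc[of n]
    unfolding card_head_alice_ahead card_head_bob_ahead score_count_eq_formula[THEN conjunct1]
    by linarith
qed

lemma dseq_eq_cseq: "dseq n = cseq n / 2"
  using arg_cong[OF cseq_eq_score_balance[of n], of real_of_int]
  by (simp add: dseq_def Delta_eq_score_balance)

section \<open>Generating functions\<close>

unbundle no vec_syntax
notation fps_nth (infixl \<open>$\<close> 75)

lemma gbinomial_Suc_ratio:
  "of_nat (Suc k) * (a gchoose Suc k) = (a - of_nat k) * (a gchoose k)"
  by (simp only: gbinomial_absorption gbinomial_absorb_comp)

lemma Suc_times_central_binomial:
  "Suc k * ((2 * Suc k) choose Suc k) = 2 * (2 * k + 1) * ((2 * k) choose k)"
proof -
  have "Suc (Suc (2 * k)) * (Suc (2 * k) choose k) = ((2 * Suc k) choose Suc k) * Suc k"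
    using Suc_times_binomial_eq[of "Suc (2 * k)" k] by simp
  moreover have "Suc (2 * k) choose k = Suc (2 * k) choose Suc k"
    using binomial_symmetric[of k "Suc (2 * k)"] by simp
  moreover have "Suc (2 * k) * ((2 * k) choose k) = (Suc (2 * k) choose Suc k) * Suc k"
    using Suc_times_binomial_eq[of "2 * k" k] .
  ultimately have "Suc k * ((2 * Suc k) choose Suc k) = 2 * (Suc (2 * k) * ((2 * k) choose k))"
    by (simp add: algebra_simps)
  then show ?thesis
    by simp
qed

lemma gbinomial_minus_half_central:
  "((-1/2 :: real) gchoose k) * (-4) ^ k = real ((2 * k) choose k)"
proof (induction k)
  case 0
  show ?case by simp
next
  case (Suc k)
  have "real (Suc k) * (((-1/2 :: real) gchoose Suc k) * (-4) ^ Suc k)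
      = (-1/2 - real k) * (-4) * (((-1/2 :: real) gchoose k) * (-4) ^ k)"
    by (simp only: mult.assoc[symmetric] gbinomial_Suc_ratio) (simp only: mult_ac power_Suc)
  also have "\<dots> = real (2 * (2 * k + 1) * ((2 * k) choose k))"
    unfolding Suc.IH by (simp add: algebra_simps)
  also have "\<dots> = real (Suc k) * real ((2 * Suc k) choose Suc k)"
    by (simp only: Suc_times_central_binomial[symmetric] of_nat_mult)
  finally show ?case
    by (metis mult_left_cancel of_nat_eq_0_iff nat.distinct(1))
qed

definition fps_rsqrt :: "'a :: field_char_0 fps \<Rightarrow> 'a fps" where
  "fps_rsqrt c = fps_binomial (-1/2) oo c"

lemma fps_rsqrt_nth_0 [simp]: "fps_rsqrt c $ 0 = 1"
  by (simp add: fps_rsqrt_def)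

lemma fps_rsqrt_squared:
  assumes "c $ 0 = 0"
  shows "fps_rsqrt c * fps_rsqrt c * (1 + c) = 1"
proof -
  have "fps_binomial (-1/2) * fps_binomial (-1/2) * (1 + fps_X) = (1 :: 'a fps)"
    by (simp flip: fps_binomial_add_mult fps_binomial_1)
  then have "(fps_binomial (-1/2) * fps_binomial (-1/2) * (1 + fps_X)) oo c = 1"
    by simp
  then show ?thesis
    using assms by (simp add: fps_rsqrt_def fps_compose_mult_distrib fps_compose_add_distrib)
qed

lemma fps_inverse_sqrt_unique:
  fixes f g p :: "'a :: field_char_0 fps"
  assumes f: "f * f * p = 1" and g: "g * g * p = 1" and "f $ 0 = g $ 0"
  shows "f = g"
proof -
  have "f * f = f * f * (g * g * p)"
    using g by simp
  also have "\<dots> = g * g * (f * f * p)"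
    by (simp only: mult_ac)
  also have "\<dots> = g * g"
    using f by simp
  finally have "(f - g) * (f + g) = 0"
    by (simp add: algebra_simps)
  moreover have "f $ 0 * f $ 0 * p $ 0 = 1"
    using arg_cong[OF f, of "\<lambda>h. h $ 0"] by simp
  then have "(f + g) $ 0 \<noteq> 0"
    using \<open>f $ 0 = g $ 0\<close> by (auto simp flip: mult_2)
  then have "f + g \<noteq> 0"
    by (intro notI) simp
  ultimately show ?thesis
    by simp
qed

definition fps_geometric :: "'a :: comm_semiring_1 fps" where
  "fps_geometric = Abs_fps (\<lambda>_. 1)"

lemma fps_geometric_times_one_minus_X: "fps_geometric * (1 - fps_X) = (1 :: 'a :: comm_ring_1 fps)"
  by (simp add: fps_eq_iff fps_geometric_def fps_mult_nth algebra_simps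
      sum.atLeast0_atMost_Suc_shift)

lemma fps_geometric_power_nth:
  "(fps_geometric ^ Suc k) $ m = (of_nat ((k + m) choose m) :: 'a :: comm_semiring_1)"
proof (induction k arbitrary: m)
  case 0
  show ?case by (simp add: fps_geometric_def)
next
  case (Suc k)
  have "(fps_geometric ^ Suc (Suc k)) $ m = (\<Sum>i=0..m. (fps_geometric ^ Suc k :: 'a fps) $ i)"
    by (simp add: power_Suc2 fps_mult_nth fps_geometric_def del: power_Suc)
  also have "\<dots> = of_nat (Suc (k + m) choose m)"
    unfolding Suc.IH using sum_choose_lower[of k m] by (simp add: atLeast0AtMost flip: of_nat_sum)
  finally show ?case by simp
qed

lemma fps_compose_mult_nth:
  fixes f c h :: "'a :: comm_ring_1 fps"
  assumes "c $ 0 = 0"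
  shows "((f oo c) * h) $ n = (\<Sum>i=0..n. f $ i * (c ^ i * h) $ n)"
proof -
  have vanish: "j < i \<Longrightarrow> (c ^ i) $ j = 0" for i j
    using startsby_zero_power_prefix[OF assms] by blast
  have "((f oo c) * h) $ n = (\<Sum>j=0..n. \<Sum>i=0..n. f $ i * (c ^ i) $ j * h $ (n - j))"
    unfolding fps_mult_nth fps_compose_nth sum_distrib_right
    by (intro sum.cong refl sum.mono_neutral_left) (auto simp: vanish)
  also have "\<dots> = (\<Sum>i=0..n. f $ i * (c ^ i * h) $ n)"
    by (subst sum.swap) (simp add: fps_mult_nth sum_distrib_left mult.assoc)
  finally show ?thesis .
qed

lemma cseq_fps_nth:
  "(fps_rsqrt (fps_const (-4) * fps_X ^ 3 * fps_geometric) * fps_geometric) $ n = real (cseq n)"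
proof -
  let ?V = "fps_const (-4) * fps_X ^ 3 * fps_geometric :: real fps"
  have "(?V ^ i * fps_geometric) $ n = (-4) ^ i * (if n < 3 * i then 0 else real ((n - 2 * i) choose i))" for i
  proof -
    have "?V ^ i * fps_geometric = fps_const ((-4) ^ i) * (fps_X ^ (3 * i) * fps_geometric ^ Suc i)"
      by (simp only: power_mult_distrib fps_const_power power_mult power_Suc2 mult.assoc)
    then have "(?V ^ i * fps_geometric) $ n =
        (-4) ^ i * (if n < 3 * i then 0 else real ((i + (n - 3 * i)) choose (n - 3 * i)))"
      by (simp only: fps_mult_left_const_nth fps_X_power_mult_nth fps_geometric_power_nth)
    then show ?thesis
      using binomial_symmetric[of i "n - 2 * i"] by (cases "n < 3 * i") auto
  qed
  moreover have "?V $ 0 = 0"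
    by simp
  ultimately have "(fps_rsqrt ?V * fps_geometric) $ n
      = (\<Sum>i=0..n. ((-1/2) gchoose i) * ((-4) ^ i * (if n < 3 * i then 0 else real ((n - 2 * i) choose i))))"
    unfolding fps_rsqrt_def fps_compose_mult_nth[of ?V, OF \<open>?V $ 0 = 0\<close>]
    by (simp only: fps_binomial_nth)
  also have "\<dots> = (\<Sum>i=0..n. real (cseq_term n i))"
    by (intro sum.cong refl) (auto simp: gbinomial_minus_half_central[symmetric] cseq_term_def)
  finally show ?thesis
    by (simp add: cseq_def atLeast0AtMost)
qed

lemma cseq_fps_factorization:
  "fps_rsqrt (fps_const (-4) * fps_X ^ 3 * fps_geometric) * fps_geometric =
   fps_rsqrt (fps_const (-2) * fps_X) * fps_rsqrt (fps_X ^ 2 * (1 + fps_const (-2) * fps_X) :: real fps)"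
proof (rule fps_inverse_sqrt_unique)
  let ?R = fps_rsqrt and ?W = "fps_geometric :: real fps"
  let ?V = "fps_const (-4) * fps_X ^ 3 * ?W" and ?A = "fps_const (-2) * fps_X :: real fps"
  let ?U = "fps_X ^ 2 * (1 + fps_const (-2) * fps_X) :: real fps"
  let ?P = "(1 - fps_X) * (1 - fps_X + fps_const (-4) * fps_X ^ 3) :: real fps"
  have "(1 - fps_X) * ?V = fps_const (-4) * fps_X ^ 3 * (?W * (1 - fps_X))"
    by (simp only: mult_ac)
  then have factor: "(1 - fps_X) * (1 + ?V) = 1 - fps_X + fps_const (-4) * fps_X ^ 3"
    by (simp only: fps_geometric_times_one_minus_X distrib_left mult_1_right)
  then have "?R ?V * ?W * (?R ?V * ?W) * ?P = ?R ?V * ?W * (?R ?V * ?W) * ((1 - fps_X) * ((1 - fps_X) * (1 + ?V)))"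
    by (simp only: factor)
  also have "\<dots> = (?R ?V * ?R ?V * (1 + ?V)) * (?W * (1 - fps_X)) * (?W * (1 - fps_X))"
    by (simp only: mult_ac)
  finally show "?R ?V * ?W * (?R ?V * ?W) * ?P = 1"
    by (simp add: fps_rsqrt_squared fps_geometric_times_one_minus_X)
  have "?P = (1 + ?A) * (1 + ?U)"
    by (simp add: algebra_simps power2_eq_square power3_eq_cube flip: fps_const_mult fps_const_add)
  then have "?R ?A * ?R ?U * (?R ?A * ?R ?U) * ?P = (?R ?A * ?R ?A * (1 + ?A)) * (?R ?U * ?R ?U * (1 + ?U))"
    by (simp only: mult_ac)
  then show "?R ?A * ?R ?U * (?R ?A * ?R ?U) * ?P = 1"
    by (simp add: fps_rsqrt_squared)
qed (simp add: fps_geometric_def)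

section \<open>The central binomial ratio\<close>

definition central_ratio :: "nat \<Rightarrow> real" where
  "central_ratio n = real ((2 * n) choose n) / 4 ^ n"

lemma central_ratio_eq_gbinomial: "central_ratio n = (-1) ^ n * ((-1/2 :: real) gchoose n)"
proof -
  have "(-4 :: real) ^ n = (-1) ^ n * 4 ^ n"
    by (simp flip: power_mult_distrib)
  then have "(-1) ^ n * ((-1/2 :: real) gchoose n) * 4 ^ n = ((-1) ^ n * (-1) ^ n) * (((-1/2) gchoose n) * (-4) ^ n)"
    by (simp add: mult_ac)
  also have "\<dots> = real ((2 * n) choose n)"
    by (simp only: gbinomial_minus_half_central flip: power_add) simp
  finally show ?thesis
    by (simp add: central_ratio_def divide_eq_eq)
qed

lemma central_ratio_0 [simp]: "central_ratio 0 = 1"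
  by (simp add: central_ratio_def)

lemma Suc_times_central_ratio: "real (Suc n) * central_ratio (Suc n) = (real n + 1/2) * central_ratio n"
proof -
  have "real (Suc n) * central_ratio (Suc n) = (-1) ^ Suc n * (of_nat (Suc n) * ((-1/2) gchoose Suc n))"
    by (simp only: central_ratio_eq_gbinomial mult_ac)
  also have "\<dots> = (-1) ^ Suc n * ((-1/2 - of_nat n) * ((-1/2) gchoose n))"
    by (simp only: gbinomial_Suc_ratio)
  also have "\<dots> = (real n + 1/2) * central_ratio n"
    by (simp add: central_ratio_eq_gbinomial algebra_simps)
  finally show ?thesis .
qed

lemma central_ratio_Suc: "central_ratio (Suc n) = central_ratio n * ((2 * n + 1) / (2 * n + 2))"
  using Suc_times_central_ratio[of n] by (simp add: field_simps)

lemma central_ratio_pos: "central_ratio n > 0"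
  by (simp add: central_ratio_def)

lemma central_ratio_le_1: "central_ratio n \<le> 1"
proof (induction n)
  case (Suc n)
  have factor_le_1: "(2 * real n + 1) / (2 * real n + 2) \<le> 1"
    by simp
  show ?case
    unfolding central_ratio_Suc by (rule mult_le_one[OF Suc.IH _ factor_le_1]) simp
qed simp

lemma Gamma_half_ratio: "Gamma (real n + 1 / 2) / Gamma (real n + 1) = sqrt pi * central_ratio n"
proof (induction n)
  case 0
  show ?case by (simp add: Gamma_one_half_real)
next
  case (Suc n)
  have "Gamma (real n + 1/2 + 1) = (real n + 1/2) * Gamma (real n + 1/2)"
    by (rule Gamma_plus1) (auto dest: nonpos_Ints_nonpos)
  moreover have "Gamma (real n + 1 + 1) = (real n + 1) * Gamma (real n + 1)"
    by (rule Gamma_plus1) (auto dest: nonpos_Ints_nonpos)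
  moreover have "real (Suc n) + 1/2 = real n + 1/2 + 1" "real (Suc n) + 1 = real n + 1 + 1"
    by simp_all
  moreover have "(real n + 1/2) / (real n + 1) = (2 * real n + 1) / (2 * real n + 2)"
    by (simp add: field_simps)
  ultimately show ?case
    by (simp only: times_divide_times_eq[symmetric] Suc.IH central_ratio_Suc mult_ac)
qed

lemma wallis_partial_product:
  "(\<Prod>k=1..n. 4 * real k ^ 2 / (4 * real k ^ 2 - 1)) = 1 / ((2 * real n + 1) * central_ratio n ^ 2)"
proof (induction n)
  case (Suc n)
  have step: "1 / ((2 * x + 1) * c ^ 2) * (4 * (x + 1) ^ 2 / (4 * (x + 1) ^ 2 - 1))
      = 1 / ((2 * (x + 1) + 1) * (c * ((2 * x + 1) / (2 * x + 2))) ^ 2)"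
    if "x \<ge> 0" "c > 0" for x c :: real
  proof -
    have "4 * (x + 1) ^ 2 - 1 = (2 * x + 1) * (2 * x + 3)" "4 * (x + 1) ^ 2 = (2 * x + 2) ^ 2"
      by (simp_all add: power2_eq_square algebra_simps)
    with that show ?thesis
      by (simp add: field_simps power2_eq_square)
  qed
  have "(\<Prod>k=1..Suc n. 4 * real k ^ 2 / (4 * real k ^ 2 - 1))
      = (\<Prod>k=1..n. 4 * real k ^ 2 / (4 * real k ^ 2 - 1)) * (4 * real (Suc n) ^ 2 / (4 * real (Suc n) ^ 2 - 1))"
    by (simp add: prod.nat_ivl_Suc' mult.commute del: of_nat_Suc)
  also have "\<dots> = 1 / ((2 * real n + 1) * central_ratio n ^ 2) * (4 * (real n + 1) ^ 2 / (4 * (real n + 1) ^ 2 - 1))"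
    using of_nat_Suc[of n, where 'a = real] by (simp only: Suc.IH add.commute[of 1])
  also have "\<dots> = 1 / ((2 * (real n + 1) + 1) * (central_ratio n * ((2 * real n + 1) / (2 * real n + 2))) ^ 2)"
    by (rule step) (simp_all add: central_ratio_pos)
  also have "\<dots> = 1 / ((2 * real (Suc n) + 1) * central_ratio (Suc n) ^ 2)"
    by (simp add: central_ratio_Suc)
  finally show ?case .
qed simp

lemma central_ratio_sq_tendsto: "(\<lambda>n. (2 * real n + 1) * central_ratio n ^ 2) \<longlonglongrightarrow> 2 / pi"
proof -
  have "(\<lambda>n. inverse (\<Prod>k=1..n. 4 * real k ^ 2 / (4 * real k ^ 2 - 1))) \<longlonglongrightarrow> inverse (pi / 2)"
    by (intro tendsto_inverse wallis) simp
  then show ?thesis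
    unfolding wallis_partial_product by simp
qed

lemma decseq_odd_times_central_ratio_sq: "decseq (\<lambda>n. (2 * real n + 1) * central_ratio n ^ 2)"
proof (rule decseq_SucI)
  fix n
  have ratio: "(2 * x + 3) * (c * ((2 * x + 1) / (2 * x + 2))) ^ 2
      = (2 * x + 1) * c ^ 2 * ((2 * x + 3) * (2 * x + 1) / (2 * x + 2) ^ 2)" for x c :: real
    by (simp add: power2_eq_square mult_ac)
  have "(2 * real n + 2) ^ 2 > 0"
    by simp
  then have "(2 * real n + 3) * (2 * real n + 1) / (2 * real n + 2) ^ 2 \<le> 1"
    by (simp add: pos_divide_le_eq power2_eq_square algebra_simps)
  then have "(2 * real n + 1) * central_ratio n ^ 2 * ((2 * real n + 3) * (2 * real n + 1) / (2 * real n + 2) ^ 2)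
      \<le> (2 * real n + 1) * central_ratio n ^ 2"
    by (intro mult_left_le) simp_all
  moreover have "2 * real (Suc n) + 1 = 2 * real n + 3"
    by simp
  ultimately show "(2 * real (Suc n) + 1) * central_ratio (Suc n) ^ 2 \<le> (2 * real n + 1) * central_ratio n ^ 2"
    by (simp only: central_ratio_Suc ratio)
qed

lemma incseq_times_central_ratio_sq: "incseq (\<lambda>n. real n * central_ratio n ^ 2)"
proof (rule incseq_SucI)
  fix n
  have ratio: "(x + 1) * (c * ((2 * x + 1) / (2 * x + 2))) ^ 2
      = c ^ 2 * ((x + 1) * (2 * x + 1) ^ 2 / (2 * x + 2) ^ 2)" for x c :: real
    by (simp add: power2_eq_square mult_ac)
  have "(2 * real n + 2) ^ 2 > 0"
    by simp
  then have "real n \<le> (real n + 1) * (2 * real n + 1) ^ 2 / (2 * real n + 2) ^ 2"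
    by (simp add: pos_le_divide_eq power2_eq_square algebra_simps)
  then have "real n * central_ratio n ^ 2
      \<le> central_ratio n ^ 2 * ((real n + 1) * (2 * real n + 1) ^ 2 / (2 * real n + 2) ^ 2)"
    by (subst mult.commute) (intro mult_left_mono; simp)
  then show "real n * central_ratio n ^ 2 \<le> real (Suc n) * central_ratio (Suc n) ^ 2"
    by (simp only: central_ratio_Suc of_nat_Suc add.commute[of 1] ratio)
qed

lemma central_ratio_sq_bounds:
  "2 / (pi * (2 * real n + 1)) \<le> central_ratio n ^ 2" "real n * central_ratio n ^ 2 \<le> 1 / pi"
proof -
  have "2 / pi \<le> (2 * real n + 1) * central_ratio n ^ 2"
    using decseq_ge[OF decseq_odd_times_central_ratio_sq central_ratio_sq_tendsto] .
  then show "2 / (pi * (2 * real n + 1)) \<le> central_ratio n ^ 2"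
    by (simp add: pos_divide_le_eq mult_ac)
  have "(\<lambda>n. (2 * real n + 1) * central_ratio n ^ 2 * (real n / (2 * real n + 1))) \<longlonglongrightarrow> 2 / pi * (1 / 2)"
    by (intro tendsto_mult central_ratio_sq_tendsto) real_asymp
  moreover have "(2 * real n + 1) * x * (real n / (2 * real n + 1)) = real n * x" for n :: nat and x :: real
  proof -
    have "2 * real n + 1 > 0"
      by simp
    then show ?thesis
      by (simp add: field_simps)
  qed
  ultimately have "(\<lambda>n. real n * central_ratio n ^ 2) \<longlonglongrightarrow> 1 / pi"
    by (simp add: mult.commute)
  then show "real n * central_ratio n ^ 2 \<le> 1 / pi"
    by (rule incseq_le[OF incseq_times_central_ratio_sq])
qed

lemma central_ratio_le_inv_sqrt:
  assumes "n \<ge> 1"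
  shows "central_ratio n \<le> 1 / sqrt (pi * real n)"
proof (rule power2_le_imp_le)
  have "real n * central_ratio n ^ 2 \<le> 1 / pi"
    by (rule central_ratio_sq_bounds(2))
  then show "central_ratio n ^ 2 \<le> (1 / sqrt (pi * real n)) ^ 2"
    using assms by (simp add: power_divide pos_le_divide_eq mult_ac)
qed simp

lemma inv_sqrt_sq_minus_central_ratio_sq:
  assumes "n \<ge> 1"
  shows "(1 / sqrt (pi * real n)) ^ 2 - central_ratio n ^ 2 \<le> 1 / (pi * real n * (2 * real n + 1))"
proof -
  have "(1 / sqrt (pi * real n)) ^ 2 - central_ratio n ^ 2 \<le> 1 / (pi * real n) - 2 / (pi * (2 * real n + 1))"
    using central_ratio_sq_bounds(1)[of n] by (simp add: power_divide)
  also have "\<dots> = 1 / (pi * real n * (2 * real n + 1))"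
    using assms by (simp add: divide_simps)
  finally show ?thesis .
qed

lemma sub_le_diff_squares_div:
  fixes a s :: real
  assumes "0 \<le> a" "a \<le> s"
  shows "s - a \<le> (s ^ 2 - a ^ 2) / s"
proof (cases "s = 0")
  case False
  have "(s - a) * s \<le> (s - a) * (s + a)"
    using assms by (intro mult_left_mono) auto
  then show ?thesis
    using assms False by (simp add: le_divide_eq power2_eq_square algebra_simps)
qed (use assms in simp)

lemma central_ratio_approx:
  assumes "n \<ge> 1"
  shows "\<bar>central_ratio n - 1 / sqrt (pi * real n)\<bar> \<le> 1 / (real n * sqrt (real n))"
proof -
  define N where "N = real n"
  define s where "s = 1 / sqrt (pi * N)"
  have N: "N \<ge> 1" and "pi * N > 0"
    using assms by (simp_all add: N_def)
  then have "s > 0"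
    by (simp add: s_def)
  have le_s: "central_ratio n \<le> s"
    using central_ratio_le_inv_sqrt[OF assms] by (simp add: s_def N_def)
  then have "s - central_ratio n \<le> (s ^ 2 - central_ratio n ^ 2) / s"
    by (intro sub_le_diff_squares_div less_imp_le[OF central_ratio_pos])
  also have "\<dots> \<le> 1 / (pi * N * (2 * N + 1)) / s"
    using inv_sqrt_sq_minus_central_ratio_sq[OF assms] \<open>s > 0\<close>
    by (intro divide_right_mono) (simp_all add: s_def N_def)
  also have "\<dots> = 1 / (sqrt (pi * N) * (2 * N + 1))"
  proof -
    have "pi * N = sqrt (pi * N) * sqrt (pi * N)"
      using \<open>pi * N > 0\<close> by simp
    then show ?thesis
      using \<open>pi * N > 0\<close> by (simp add: s_def divide_simps)
  qed
  also have "\<dots> \<le> 1 / (N * sqrt N)"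
  proof -
    have "sqrt N \<le> sqrt (pi * N)" "N \<le> 2 * N + 1"
      using N pi_gt3 by simp_all
    then have "sqrt N * N \<le> sqrt (pi * N) * (2 * N + 1)"
      using N by (intro mult_mono) simp_all
    then show ?thesis
      using N by (intro divide_left_mono) (auto simp: mult.commute)
  qed
  finally show ?thesis
    using le_s by (simp add: s_def N_def)
qed

lemma central_ratio_bigo: "(\<lambda>n. central_ratio n - 1 / sqrt (pi * real n)) \<in> O(\<lambda>n. real n powr (-3/2))"
proof -
  have "(\<lambda>n. central_ratio n - 1 / sqrt (pi * real n)) \<in> O(\<lambda>n. 1 / (real n * sqrt (real n)))"
  proof (intro bigoI[where c = 1])
    show "\<forall>\<^sub>F n in at_top. norm (central_ratio n - 1 / sqrt (pi * real n)) \<le> 1 * norm (1 / (real n * sqrt (real n)))"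
      using eventually_ge_at_top[of "1 :: nat"] by eventually_elim (simp add: central_ratio_approx)
  qed
  also have "(\<lambda>n. 1 / (real n * sqrt (real n))) \<in> O(\<lambda>n. real n powr (-3/2))"
    by real_asymp
  finally show ?thesis .
qed

section \<open>The correction term\<close>

lemma fps_rsqrt_linear_nth: "fps_rsqrt (fps_const c * fps_X) $ n = c ^ n * ((-1/2) gchoose n)"
  by (simp add: fps_rsqrt_def fps_compose_linear)

lemma one_plus_linear_power_nth:
  "((1 + fps_const c * fps_X) ^ m) $ l = c ^ l * (of_nat (m choose l) :: 'a :: field_char_0)"
proof -
  have "(1 + fps_const c * fps_X) ^ m = fps_binomial (of_nat m) oo (fps_const c * fps_X)"
    by (simp add: fps_binomial_of_nat fps_compose_power[symmetric] fps_compose_add_distrib)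
  then show ?thesis
    by (simp add: fps_compose_linear binomial_gbinomial)
qed

lemma one_plus_linear_times_rsqrt_nth:
  "((1 + fps_const c * fps_X) * fps_rsqrt (fps_const c * fps_X)) $ k = c ^ k * ((1/2 :: 'a :: field_char_0) gchoose k)"
proof -
  have "(1 + fps_const c * fps_X) * fps_rsqrt (fps_const c * fps_X)
      = (fps_binomial 1 * fps_binomial (-1/2)) oo (fps_const c * fps_X)"
    by (simp add: fps_rsqrt_def fps_compose_mult_distrib fps_compose_add_distrib fps_binomial_1)
  also have "fps_binomial 1 * fps_binomial (-1/2) = fps_binomial (1/2 :: 'a)"
    by (simp flip: fps_binomial_add_mult)
  finally show ?thesis
    by (simp add: fps_compose_linear)
qed

lemma correction_term_nth:
  assumes "i \<ge> 1"
  shows "((fps_X ^ 2 * (1 + fps_const (-2) * fps_X)) ^ i * fps_rsqrt (fps_const (-2) * fps_X)) $ n =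
    (if n < 2 * i then 0 else
      (\<Sum>l=0..n - 2 * i. (-2) ^ l * real ((i - 1) choose l) *
         ((-2) ^ (n - 2 * i - l) * ((1/2) gchoose (n - 2 * i - l)))))"
proof -
  let ?L = "1 + fps_const (-2) * fps_X :: real fps"
  have "(fps_X ^ 2 * ?L) ^ i = fps_X ^ (2 * i) * ?L ^ i"
    by (simp only: power_mult_distrib power_mult)
  moreover have "?L ^ i = ?L ^ (i - 1) * ?L"
    using assms by (simp flip: power_Suc2)
  ultimately have "(fps_X ^ 2 * ?L) ^ i * fps_rsqrt (fps_const (-2) * fps_X)
      = fps_X ^ (2 * i) * (?L ^ (i - 1) * (?L * fps_rsqrt (fps_const (-2) * fps_X)))"
    by (simp only: mult.assoc)
  then have "((fps_X ^ 2 * ?L) ^ i * fps_rsqrt (fps_const (-2) * fps_X)) $ n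
      = (if n < 2 * i then 0 else (?L ^ (i - 1) * (?L * fps_rsqrt (fps_const (-2) * fps_X))) $ (n - 2 * i))"
    by (simp only: fps_X_power_mult_nth)
  then show ?thesis
    by (simp only: fps_mult_nth[of "?L ^ (i - 1)"] one_plus_linear_power_nth
        one_plus_linear_times_rsqrt_nth)
qed

lemma gbinomial_half_sq_step:
  fixes x :: real
  assumes "x \<ge> 1"
  shows "4 / (x + 1) ^ 3 * (x - 1/2) ^ 2 / (x + 1) ^ 2 \<le> 4 / (x + 2) ^ 3"
proof -
  have "4 * (x + 1) ^ 5 - (2 * x - 1) ^ 2 * (x + 2) ^ 3 = -4 + 40 * x + 50 * x ^ 2 + 15 * x ^ 3"
    by (simp add: algebra_simps power2_eq_square power3_eq_cube power_numeral_reduce)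
  moreover have "-4 + 40 * x + 50 * x ^ 2 + 15 * x ^ 3 \<ge> 0"
    using assms by (simp add: add_nonneg_nonneg)
  ultimately have "(2 * x - 1) ^ 2 * (x + 2) ^ 3 \<le> 4 * (x + 1) ^ 5"
    by linarith
  moreover have "4 / (x + 1) ^ 3 * (x - 1/2) ^ 2 / (x + 1) ^ 2 = (2 * x - 1) ^ 2 / (x + 1) ^ 5"
  proof -
    have "(x - 1/2) ^ 2 * 4 = (2 * x - 1) ^ 2"
      by (simp add: power2_eq_square algebra_simps)
    moreover have "(x + 1) ^ 3 * (x + 1) ^ 2 = (x + 1) ^ 5"
      by (simp flip: power_add)
    ultimately show ?thesis
      by simp
  qed
  ultimately show ?thesis
    using assms by (simp add: field_simps)
qed

lemma gbinomial_half_sq_le: "((1/2 :: real) gchoose k) ^ 2 \<le> 4 / (real k + 1) ^ 3"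
proof (induction k)
  case (Suc k)
  show ?case
  proof (cases "k = 0")
    case False
    have "real (Suc k) * ((1/2 :: real) gchoose Suc k) = (1/2 - real k) * ((1/2) gchoose k)"
      by (rule gbinomial_Suc_ratio)
    then have "((1/2 :: real) gchoose Suc k) = ((1/2) gchoose k) * (1/2 - real k) / (real k + 1)"
      by (simp add: field_simps)
    then have "((1/2 :: real) gchoose Suc k) ^ 2 = ((1/2) gchoose k) ^ 2 * (real k - 1/2) ^ 2 / (real k + 1) ^ 2"
      by (simp add: power_divide power_mult_distrib power2_commute)
    also have "\<dots> \<le> 4 / (real k + 1) ^ 3 * (real k - 1/2) ^ 2 / (real k + 1) ^ 2"
      by (intro divide_right_mono mult_right_mono Suc.IH) auto
    also have "\<dots> \<le> 4 / (real (Suc k) + 1) ^ 3"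
      using gbinomial_half_sq_step[of "real k"] False by (simp add: add.commute add.left_commute)
    finally show ?thesis .
  qed (simp add: power2_eq_square)
qed simp

lemma gbinomial_half_abs_le:
  assumes "real n + 1 \<le> (real k + 1) * c" "c \<ge> 1"
  shows "\<bar>(1/2 :: real) gchoose k\<bar> \<le> 2 * c ^ 2 / ((real n + 1) * sqrt (real n + 1))"
proof -
  define x where "x = real k + 1"
  define z where "z = real n + 1"
  have x: "x \<ge> 1" and z: "z \<ge> 1" and "z \<le> x * c"
    using assms by (simp_all add: x_def z_def)
  have "\<bar>(1/2 :: real) gchoose k\<bar> = sqrt (((1/2) gchoose k) ^ 2)"
    by simp
  also have "\<dots> \<le> sqrt (4 / x ^ 3)"
    unfolding x_def by (rule real_sqrt_le_mono[OF gbinomial_half_sq_le])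
  also have "\<dots> = 2 / (x * sqrt x)"
    using x by (simp add: real_sqrt_divide real_sqrt_mult power3_eq_cube)
  also have "\<dots> \<le> 2 * c ^ 2 / (z * sqrt z)"
  proof -
    have "z * sqrt z \<le> (x * c) * sqrt (x * c)"
      using z \<open>z \<le> x * c\<close> by (intro mult_mono real_sqrt_le_mono) auto
    also have "\<dots> = (x * sqrt x) * (c * sqrt c)"
      by (simp add: real_sqrt_mult algebra_simps)
    also have "\<dots> \<le> (x * sqrt x) * c ^ 2"
      using x assms(2) by (intro mult_left_mono) (auto simp: power2_eq_square real_sqrt_le_iff
          intro: mult_left_mono order_trans[OF real_sqrt_le_mono[of c "c * c"]])
    finally have "z * sqrt z \<le> x * sqrt x * c ^ 2" .
    moreover have "0 < x * sqrt x" "0 < z * sqrt z"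
      using x z by auto
    ultimately show ?thesis
      by (simp add: field_simps)
  qed
  finally show ?thesis
    by (simp add: z_def)
qed

lemma sum_binomial_prefix_le: "(\<Sum>l=0..M. real (k choose l)) \<le> 2 ^ k"
proof -
  have "(\<Sum>l=0..M. real (k choose l)) \<le> (\<Sum>l=0..max M k. real (k choose l))"
    by (intro sum_mono2) auto
  also have "\<dots> = (\<Sum>l\<le>k. real (k choose l))"
    by (intro sum.mono_neutral_right) auto
  also have "\<dots> = 2 ^ k"
    using choose_row_sum[of k] by (simp flip: of_nat_sum)
  finally show ?thesis .
qed

lemma gbinomial_half_abs_le_correction:
  assumes "l < i" "l + 2 * i \<le> n"
  shows "\<bar>(1/2 :: real) gchoose (n - 2 * i - l)\<bar> \<le> 2 * (3 * real i + 1) ^ 2 / ((real n + 1) * sqrt (real n + 1))"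
proof (rule gbinomial_half_abs_le)
  define k where "k = n - 2 * i - l"
  have "n + 1 \<le> (k + 1) + 3 * i * (k + 1)"
    using assms by (simp add: k_def)
  then have "n + 1 \<le> (k + 1) * (3 * i + 1)"
    by (simp add: algebra_simps)
  then have "real (n + 1) \<le> real ((k + 1) * (3 * i + 1))"
    by (simp only: of_nat_le_iff)
  then show "real n + 1 \<le> (real (n - 2 * i - l) + 1) * (3 * real i + 1)"
    unfolding k_def[symmetric] by (simp add: algebra_simps)
qed simp

lemma abs_correction_term_le:
  assumes "i \<ge> 1" "2 * i \<le> n"
  shows "\<bar>((fps_X ^ 2 * (1 + fps_const (-2) * fps_X)) ^ i * fps_rsqrt (fps_const (-2) * fps_X)) $ n\<bar>
    \<le> (\<Sum>l=0..n - 2 * i. 2 ^ (n - 2 * i) * (real ((i - 1) choose l) * \<bar>(1/2) gchoose (n - 2 * i - l)\<bar>))"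
proof -
  define m where "m = n - 2 * i"
  have "\<bar>((fps_X ^ 2 * (1 + fps_const (-2) * fps_X)) ^ i * fps_rsqrt (fps_const (-2) * fps_X)) $ n\<bar>
      \<le> (\<Sum>l=0..m. \<bar>(-2) ^ l * real ((i - 1) choose l) * ((-2) ^ (m - l) * ((1/2) gchoose (m - l)))\<bar>)"
    unfolding correction_term_nth[OF assms(1)] m_def using assms(2) by (simp add: sum_abs)
  also have "\<dots> = (\<Sum>l=0..m. 2 ^ m * (real ((i - 1) choose l) * \<bar>(1/2) gchoose (m - l)\<bar>))"
  proof (intro sum.cong refl)
    fix l assume "l \<in> {0..m}"
    then have "(2 :: real) ^ l * 2 ^ (m - l) = 2 ^ m"
      by (simp flip: power_add)
    then show "\<bar>(-2) ^ l * real ((i - 1) choose l) * ((-2) ^ (m - l) * ((1/2) gchoose (m - l)))\<bar>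
        = 2 ^ m * (real ((i - 1) choose l) * \<bar>(1/2) gchoose (m - l)\<bar>)"
      by (simp add: abs_mult power_abs mult_ac)
  qed
  finally show ?thesis
    by (simp add: m_def)
qed

lemma correction_term_bound:
  assumes "i \<ge> 1"
  shows "\<bar>((fps_X ^ 2 * (1 + fps_const (-2) * fps_X)) ^ i * fps_rsqrt (fps_const (-2) * fps_X)) $ n\<bar> / 2 ^ n
    \<le> (3 * real i + 1) ^ 2 / 2 ^ i / ((real n + 1) * sqrt (real n + 1))"
proof (cases "n < 2 * i")
  case True
  then show ?thesis
    using assms by (simp add: correction_term_nth)
next
  case False
  define m where "m = n - 2 * i"
  define B where "B = 2 * (3 * real i + 1) ^ 2 / ((real n + 1) * sqrt (real n + 1))"
  have B_nonneg: "B \<ge> 0"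
    by (simp add: B_def)
  have term_le: "real ((i - 1) choose l) * \<bar>(1/2) gchoose (m - l)\<bar> \<le> real ((i - 1) choose l) * B"
    if "l \<le> m" for l
  proof (cases "l < i")
    case True
    then have "\<bar>(1/2) gchoose (m - l)\<bar> \<le> B"
      using that False gbinomial_half_abs_le_correction[of l i n] by (simp add: m_def B_def)
    then show ?thesis
      by (rule mult_left_mono) simp
  qed (use assms in \<open>simp add: binomial_eq_0\<close>)
  have "\<bar>((fps_X ^ 2 * (1 + fps_const (-2) * fps_X)) ^ i * fps_rsqrt (fps_const (-2) * fps_X)) $ n\<bar>
      \<le> (\<Sum>l=0..m. 2 ^ m * (real ((i - 1) choose l) * \<bar>(1/2) gchoose (m - l)\<bar>))"
    unfolding m_def using abs_correction_term_le[OF assms] False by simp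
  also have "\<dots> \<le> (\<Sum>l=0..m. 2 ^ m * (real ((i - 1) choose l) * B))"
    by (intro sum_mono mult_left_mono term_le) auto
  also have "\<dots> = 2 ^ m * B * (\<Sum>l=0..m. real ((i - 1) choose l))"
    by (simp add: sum_distrib_left mult_ac)
  also have "\<dots> \<le> 2 ^ m * B * 2 ^ (i - 1)"
    using B_nonneg by (intro mult_left_mono sum_binomial_prefix_le) auto
  also have "\<dots> = 2 ^ n * (B / 2 ^ Suc i)"
  proof -
    have "n = m + (i - 1) + Suc i"
      using False assms by (simp add: m_def)
    then show ?thesis
      by (simp add: power_add)
  qed
  finally show ?thesis
    by (simp add: B_def pos_divide_le_eq mult.commute)
qed

lemma sum_quadratic_over_powers_of_two:
  "(\<Sum>i<N. (3 * real i + 1) ^ 2 / 2 ^ i) = 68 - (18 * real N ^ 2 + 48 * real N + 68) / 2 ^ N"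
proof (induction N)
  case (Suc N)
  define t :: real where "t = 2 ^ N"
  have "t > 0"
    by (simp add: t_def)
  have "18 * real (Suc N) ^ 2 + 48 * real (Suc N) + 68
      = 2 * (18 * real N ^ 2 + 48 * real N + 68) - 2 * (3 * real N + 1) ^ 2"
    by (simp add: power2_eq_square algebra_simps)
  moreover have "68 - a / t + b / t = 68 - (2 * a - 2 * b) / (2 * t)" for a b
    using \<open>t > 0\<close> by (simp add: field_simps)
  ultimately show ?case
    using Suc.IH by (simp add: t_def)
qed simp

lemma abs_gbinomial_minus_half_le_1: "\<bar>(-1/2 :: real) gchoose i\<bar> \<le> 1"
proof -
  have "\<bar>(-1/2 :: real) gchoose i\<bar> = \<bar>central_ratio i\<bar>"
    by (simp add: central_ratio_eq_gbinomial abs_mult power_abs)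
  then show ?thesis
    using central_ratio_le_1 central_ratio_pos by (simp add: less_imp_le)
qed

lemma correction_bound:
  "\<bar>(fps_rsqrt (fps_const (-2) * fps_X) * fps_rsqrt (fps_X ^ 2 * (1 + fps_const (-2) * fps_X))) $ n
      - fps_rsqrt (fps_const (-2) * fps_X) $ n\<bar> / 2 ^ n
    \<le> 68 / ((real n + 1) * sqrt (real n + 1))"
proof -
  let ?A = "fps_rsqrt (fps_const (-2) * fps_X) :: real fps"
  let ?U = "fps_X ^ 2 * (1 + fps_const (-2) * fps_X) :: real fps"
  define D where "D = (real n + 1) * sqrt (real n + 1)"
  have "D > 0"
    by (simp add: D_def)
  have "(fps_rsqrt ?U * ?A) $ n = (\<Sum>i=0..n. ((-1/2) gchoose i) * (?U ^ i * ?A) $ n)"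
    unfolding fps_rsqrt_def by (subst fps_compose_mult_nth) simp_all
  then have "\<bar>(?A * fps_rsqrt ?U) $ n - ?A $ n\<bar> = \<bar>\<Sum>i=1..n. ((-1/2) gchoose i) * (?U ^ i * ?A) $ n\<bar>"
    by (simp add: sum.atLeast_Suc_atMost mult.commute)
  also have "\<dots> \<le> (\<Sum>i=1..n. \<bar>((-1/2) gchoose i) * (?U ^ i * ?A) $ n\<bar>)"
    by (rule sum_abs)
  also have "\<dots> \<le> (\<Sum>i=1..n. \<bar>(?U ^ i * ?A) $ n\<bar>)"
    using abs_gbinomial_minus_half_le_1 by (intro sum_mono) (simp add: abs_mult mult_left_le_one_le)
  finally have "\<bar>(?A * fps_rsqrt ?U) $ n - ?A $ n\<bar> / 2 ^ n \<le> (\<Sum>i=1..n. \<bar>(?U ^ i * ?A) $ n\<bar> / 2 ^ n)"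
    unfolding sum_divide_distrib[symmetric] by (rule divide_right_mono) simp
  also have "\<dots> \<le> (\<Sum>i=1..n. (3 * real i + 1) ^ 2 / 2 ^ i / D)"
    unfolding D_def by (intro sum_mono correction_term_bound) auto
  also have "\<dots> \<le> (\<Sum>i<Suc n. (3 * real i + 1) ^ 2 / 2 ^ i) / D"
    unfolding sum_divide_distrib[symmetric] using \<open>D > 0\<close> by (intro divide_right_mono sum_mono2) auto
  also have "\<dots> \<le> 68 / D"
    unfolding sum_quadratic_over_powers_of_two using \<open>D > 0\<close> by (intro divide_right_mono) auto
  finally show ?thesis
    by (simp add: D_def)
qed

lemma fps_rsqrt_linear_nth_eq_central_ratio: "fps_rsqrt (fps_const (-2) * fps_X) $ n = 2 ^ n * central_ratio n"
  by (simp add: fps_rsqrt_linear_nth central_ratio_eq_gbinomial flip: power_mult_distrib)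

lemma dseq_approx:
  "\<bar>dseq n / 2 ^ n - 1 / (2 * sqrt pi) * (Gamma (real n + 1 / 2) / Gamma (real n + 1))\<bar>
    \<le> 34 / ((real n + 1) * sqrt (real n + 1))"
proof -
  let ?S = "(fps_rsqrt (fps_const (-2) * fps_X) * fps_rsqrt (fps_X ^ 2 * (1 + fps_const (-2) * fps_X))) $ n"
  have "dseq n = ?S / 2"
    by (simp add: dseq_eq_cseq flip: cseq_fps_nth cseq_fps_factorization)
  moreover have "1 / (2 * sqrt pi) * (sqrt pi * central_ratio n) = central_ratio n / 2"
    by simp
  ultimately have "dseq n / 2 ^ n - 1 / (2 * sqrt pi) * (Gamma (real n + 1 / 2) / Gamma (real n + 1))
      = ((?S - 2 ^ n * central_ratio n) / 2 ^ n) / 2"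
    unfolding Gamma_half_ratio by (simp add: field_simps)
  then show ?thesis
    using correction_bound[of n] by (simp add: fps_rsqrt_linear_nth_eq_central_ratio abs_divide)
qed

lemma dseq_bigo:
  "(\<lambda>n. dseq n / 2 ^ n - 1 / (2 * sqrt pi) * (Gamma (real n + 1 / 2) / Gamma (real n + 1)))
     \<in> O(\<lambda>n. real n powr (-3/2))"
proof -
  have "(\<lambda>n. dseq n / 2 ^ n - 1 / (2 * sqrt pi) * (Gamma (real n + 1 / 2) / Gamma (real n + 1)))
      \<in> O(\<lambda>n. 1 / ((real n + 1) * sqrt (real n + 1)))"
    using dseq_approx by (intro bigoI[where c = 34] always_eventually) simp
  also have "(\<lambda>n. 1 / ((real n + 1) * sqrt (real n + 1))) \<in> O(\<lambda>n. real n powr (-3/2))"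
    by real_asymp
  finally show ?thesis .
qed

theorem mainTheorem14:
  shows "(\<lambda>n. dseq n / 2 ^ n - 1 / (2 * sqrt pi) * (Gamma (real n + 1 / 2) / Gamma (real n + 1)))
           \<in> O(\<lambda>n. real n powr (-3/2)) \<and>
         (\<lambda>n. Delta n - 1 / (2 * sqrt (pi * real n))) \<in> O(\<lambda>n. real n powr (-3/2))"
proof
  let ?d = "\<lambda>n. dseq n / 2 ^ n - 1 / (2 * sqrt pi) * (Gamma (real n + 1 / 2) / Gamma (real n + 1))"
  let ?c = "\<lambda>n. (central_ratio n - 1 / sqrt (pi * real n)) / 2"
  have "(\<lambda>n. Delta n - 1 / (2 * sqrt (pi * real n))) = (\<lambda>n. ?d n + ?c n - 1 / 2 / 2 ^ n)"
    unfolding Gamma_half_ratio by (intro ext) (simp add: dseq_def field_simps)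
  moreover have "?c \<in> O(\<lambda>n. real n powr (-3/2))"
    using central_ratio_bigo by simp
  moreover have "(\<lambda>n. 1 / 2 / 2 ^ n :: real) \<in> O(\<lambda>n. real n powr (-3/2))"
    by real_asymp
  ultimately show "(\<lambda>n. Delta n - 1 / (2 * sqrt (pi * real n))) \<in> O(\<lambda>n. real n powr (-3/2))"
    using dseq_bigo by (simp only: sum_in_bigo)
qed (rule dseq_bigo)

end
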